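(* Let $H$ be an Abelian group, $X$ a simplicial set and $\gamma:X_2\to H$ a normalized 2-cocycle. Then the maps $\eta_n:X_n\to N(H)_{n-1}=H^{n-1}$ defined inductively by $\eta_1(x)=0$, $\eta_2(x)=\gamma(x)$ and \[ \eta_n(x)=\big(\gamma(d_3\cdots d_n(x)),\ \eta_{n-1}(d_1x)-\eta_{n-1}(d_0x)\big)\in H\times H^{n-2}\qquad(n\ge3) \] define an $N(H)$-valued twisting function on $X$.
   Context: $N(H)$ is the nerve of $H$: $N(H)_n=H^n$, $d_0$ drops the first entry, $d_n$ drops the last, $d_i$ ($0<i<n$) replaces $a_i,a_{i+1}$ by $a_i+a_{i+1}$, $s_j$ inserts $0$ after the $j$-th entry. A normalized 2-cocycle is $\gamma:X_2\to H$ vanishing on degenerate simplices with $\gamma(d_0\sigma)-\gamma(d_1\sigma)+\gamma(d_2\sigma)-\gamma(d_3\sigma)=0$ for all $\sigma\in X_3$. An $N(H)$-valued twisting function is a family $\eta_n:X_n\to N(H)_{n-1}$, $n\ge1$, satisfying $d_0\eta(x)=\eta(d_1x)-\eta(d_0x)$, $d_i\eta(x)=\eta(d_{i+1}x)$ for $i>0$, $\eta(s_0x)=0$, $\eta(s_jx)=s_{j-1}\eta(x)$ for $j>0$; equivalently, it makes $\{N(H)_n\times X_n\}$ a simplicial set with $d_0(g,x)=(d_0g+\eta(x),d_0x)$ and the other structure maps componentwise. *)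

theory Defs
  imports Main
begin

definition simplicial_set ::
  "(nat \<Rightarrow> 'x set) \<Rightarrow> (nat \<Rightarrow> nat \<Rightarrow> 'x \<Rightarrow> 'x) \<Rightarrow> (nat \<Rightarrow> nat \<Rightarrow> 'x \<Rightarrow> 'x) \<Rightarrow> bool" where
  "simplicial_set X d s \<longleftrightarrow>
     (\<forall>n i x. 1 \<le> n \<longrightarrow> i \<le> n \<longrightarrow> x \<in> X n \<longrightarrow> d n i x \<in> X (n - 1)) \<and>
     (\<forall>n j x. j \<le> n \<longrightarrow> x \<in> X n \<longrightarrow> s n j x \<in> X (Suc n)) \<and>
     \<comment> \<open>d_i d_j = d_{j-1} d_i for i < j\<close>
     (\<forall>n i j x. 2 \<le> n \<longrightarrow> i < j \<longrightarrow> j \<le> n \<longrightarrow> x \<in> X n \<longrightarrow>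
        d (n - 1) i (d n j x) = d (n - 1) (j - 1) (d n i x)) \<and>
     \<comment> \<open>d_i s_j = s_{j-1} d_i for i < j\<close>
     (\<forall>n i j x. i < j \<longrightarrow> j \<le> n \<longrightarrow> x \<in> X n \<longrightarrow>
        d (Suc n) i (s n j x) = s (n - 1) (j - 1) (d n i x)) \<and>
     \<comment> \<open>d_j s_j = id = d_{j+1} s_j\<close>
     (\<forall>n j x. j \<le> n \<longrightarrow> x \<in> X n \<longrightarrow>
        d (Suc n) j (s n j x) = x \<and> d (Suc n) (Suc j) (s n j x) = x) \<and>
     \<comment> \<open>d_i s_j = s_j d_{i-1} for i > j+1\<close>
     (\<forall>n i j x. Suc j < i \<longrightarrow> i \<le> Suc n \<longrightarrow> x \<in> X n \<longrightarrow>
        d (Suc n) i (s n j x) = s (n - 1) j (d n (i - 1) x)) \<and>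
     \<comment> \<open>s_i s_j = s_{j+1} s_i for i <= j\<close>
     (\<forall>n i j x. i \<le> j \<longrightarrow> j \<le> n \<longrightarrow> x \<in> X n \<longrightarrow>
        s (Suc n) i (s n j x) = s (Suc n) (Suc j) (s n i x))"

section \<open>The nerve N(H) of an abelian group: N(H)_n = H^n as lists of length n\<close>

definition nerve_face :: "nat \<Rightarrow> nat \<Rightarrow> 'h::ab_group_add list \<Rightarrow> 'h list" where
  "nerve_face n i g =
     (if i = 0 then tl g
      else if i = n then butlast g
      else take (i - 1) g @ [g ! (i - 1) + g ! i] @ drop (Suc i) g)"

definition nerve_degen :: "nat \<Rightarrow> nat \<Rightarrow> 'h::ab_group_add list \<Rightarrow> 'h list" where
  "nerve_degen n j g = take j g @ [0] @ drop j g"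

definition nerve_minus :: "'h::ab_group_add list \<Rightarrow> 'h list \<Rightarrow> 'h list" where
  "nerve_minus g h = map2 (-) g h"

definition normalized_2_cocycle ::
  "(nat \<Rightarrow> 'x set) \<Rightarrow> (nat \<Rightarrow> nat \<Rightarrow> 'x \<Rightarrow> 'x) \<Rightarrow> (nat \<Rightarrow> nat \<Rightarrow> 'x \<Rightarrow> 'x)
    \<Rightarrow> ('x \<Rightarrow> 'h::ab_group_add) \<Rightarrow> bool" where
  "normalized_2_cocycle X d s \<gamma> \<longleftrightarrow>
     (\<forall>x j. x \<in> X 1 \<longrightarrow> j \<le> 1 \<longrightarrow> \<gamma> (s 1 j x) = 0) \<and>
     (\<forall>\<sigma> \<in> X 3. \<gamma> (d 3 0 \<sigma>) - \<gamma> (d 3 1 \<sigma>) + \<gamma> (d 3 2 \<sigma>) - \<gamma> (d 3 3 \<sigma>) = 0)"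

definition twisting_function ::
  "(nat \<Rightarrow> 'x set) \<Rightarrow> (nat \<Rightarrow> nat \<Rightarrow> 'x \<Rightarrow> 'x) \<Rightarrow> (nat \<Rightarrow> nat \<Rightarrow> 'x \<Rightarrow> 'x)
    \<Rightarrow> (nat \<Rightarrow> 'x \<Rightarrow> 'h::ab_group_add list) \<Rightarrow> bool" where
  "twisting_function X d s \<eta> \<longleftrightarrow>
     (\<forall>n x. 1 \<le> n \<longrightarrow> x \<in> X n \<longrightarrow> length (\<eta> n x) = n - 1) \<and>
     (\<forall>n x. 2 \<le> n \<longrightarrow> x \<in> X n \<longrightarrow>
        nerve_face (n - 1) 0 (\<eta> n x) = nerve_minus (\<eta> (n - 1) (d n 1 x)) (\<eta> (n - 1) (d n 0 x))) \<and>
     (\<forall>n i x. 2 \<le> n \<longrightarrow> 0 < i \<longrightarrow> i \<le> n - 1 \<longrightarrow> x \<in> X n \<longrightarrow>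
        nerve_face (n - 1) i (\<eta> n x) = \<eta> (n - 1) (d n (Suc i) x)) \<and>
     (\<forall>n x. x \<in> X n \<longrightarrow> \<eta> (Suc n) (s n 0 x) = replicate n 0) \<and>
     (\<forall>n j x. 0 < j \<longrightarrow> j \<le> n \<longrightarrow> x \<in> X n \<longrightarrow>
        \<eta> (Suc n) (s n j x) = nerve_degen (n - 1) (j - 1) (\<eta> n x))"

text \<open>top_faces d k x, for x in X (k+2), is d_3 ... d_{k+2} x (d_{k+2} applied first).\<close>
fun top_faces :: "(nat \<Rightarrow> nat \<Rightarrow> 'x \<Rightarrow> 'x) \<Rightarrow> nat \<Rightarrow> 'x \<Rightarrow> 'x" where
  "top_faces d 0 x = x"
| "top_faces d (Suc k) x = top_faces d k (d (k + 3) (k + 3) x)"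

fun eta_cocycle :: "('x \<Rightarrow> 'h::ab_group_add) \<Rightarrow> (nat \<Rightarrow> nat \<Rightarrow> 'x \<Rightarrow> 'x) \<Rightarrow> nat \<Rightarrow> 'x \<Rightarrow> 'h list" where
  "eta_cocycle \<gamma> d 0 x = []"
| "eta_cocycle \<gamma> d (Suc 0) x = []"
| "eta_cocycle \<gamma> d (Suc (Suc 0)) x = [\<gamma> x]"
| "eta_cocycle \<gamma> d (Suc (Suc (Suc k))) x =
     \<gamma> (top_faces d (Suc k) x) #
     nerve_minus (eta_cocycle \<gamma> d (Suc (Suc k)) (d (Suc (Suc (Suc k))) 1 x))
                 (eta_cocycle \<gamma> d (Suc (Suc k)) (d (Suc (Suc (Suc k))) 0 x))"

end

theory Submission
  imports Defs
begin

(* The tail of eta_n(x) is eta_(n-1)(d_1 x) - eta_(n-1)(d_0 x), so the condition on d_0 holds by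
   construction. The faces d_i (i >= 2) and all degeneracies of the nerve keep the head entry
   gamma(d_3 ... d_n x) and act entrywise on differences, so their conditions follow by induction
   on n from the simplicial identities. The cocycle condition is needed only for d_1, which adds
   the first two entries: if y = d_4 ... d_n x is the front 3-face of x, these are gamma(d_3 y) and
   gamma(d_1 y) - gamma(d_0 y), whose sum gamma(d_2 y) is the head of eta_(n-1)(d_2 x).
   Normalization of gamma makes the head vanish on s_0 x and s_1 x. *)

lemma length_nerve_minus [simp]: "length (nerve_minus u w) = min (length u) (length w)"
  by (simp add: nerve_minus_def)

lemma nerve_minus_Nil [simp]: "nerve_minus [] w = []" "nerve_minus u [] = []"
  by (simp_all add: nerve_minus_def)

lemma nerve_minus_Cons [simp]: "nerve_minus (a # u) (b # w) = (a - b) # nerve_minus u w"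
  by (simp add: nerve_minus_def)

lemma nerve_minus_self: "nerve_minus u u = replicate (length u) (0::'h::ab_group_add)"
  by (induction u) auto

lemma nerve_minus_replicate_zero:
  "length u = n \<Longrightarrow> nerve_minus u (replicate n (0::'h::ab_group_add)) = u"
  by (induction u arbitrary: n) auto

lemma nerve_minus_cancel:
  fixes u v w :: "'h::ab_group_add list"
  assumes "length u = length v" and "length w = length v"
  shows "nerve_minus (nerve_minus u v) (nerve_minus w v) = nerve_minus u w"
  using assms
proof (induction u arbitrary: v w)
  case (Cons a u)
  then obtain b v' c w' where "v = b # v'" "w = c # w'"
    by (metis length_Suc_conv)
  with Cons show ?case by simp
qed simp

lemma nerve_face_0 [simp]: "nerve_face n 0 g = tl g"
  by (simp add: nerve_face_def)

lemma nerve_face_1_Cons_Cons: "nerve_face (Suc (Suc n)) (Suc 0) (a # b # w) = (a + b) # w"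
  by (simp add: nerve_face_def)

lemma nerve_face_Suc_Cons:
  assumes "0 < i" and "i \<le> n" and "length v = n"
  shows "nerve_face (Suc n) (Suc i) (a # v) = a # nerve_face n i v"
  using assms by (cases "i = n") (auto simp: nerve_face_def nth_Cons' take_Cons')

lemma nerve_face_minus:
  fixes u w :: "'h::ab_group_add list"
  assumes "length u = n" and "length w = n" and "i \<le> n"
  shows "nerve_face n i (nerve_minus u w) = nerve_minus (nerve_face n i u) (nerve_face n i w)"
proof -
  have "tl (map2 f u' w') = map2 f (tl u') (tl w')" for f :: "'h \<Rightarrow> 'h \<Rightarrow> 'h" and u' w'
    by (cases u'; cases w') auto
  then show ?thesis
    using assms unfolding nerve_face_def nerve_minus_def
    by (auto simp: take_zip drop_zip take_map drop_map butlast_conv_take)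
qed

lemma nerve_degen_0: "nerve_degen n 0 v = 0 # v"
  by (simp add: nerve_degen_def)

lemma nerve_degen_Suc_Cons: "nerve_degen (Suc n) (Suc j) (a # v) = a # nerve_degen n j v"
  by (simp add: nerve_degen_def)

lemma nerve_degen_minus:
  fixes u w :: "'h::ab_group_add list"
  assumes "length u = length w"
  shows "nerve_degen n j (nerve_minus u w) = nerve_minus (nerve_degen n j u) (nerve_degen n j w)"
  using assms unfolding nerve_degen_def nerve_minus_def
  by (simp add: take_zip drop_zip take_map drop_map)

lemma length_eta_cocycle: "length (eta_cocycle \<gamma> d n x) = n - 1"
  by (induction \<gamma> d n x rule: eta_cocycle.induct) auto

(* The face of x in X (m + k) spanned by its first m + 1 vertices. *)
fun front_face :: "(nat \<Rightarrow> nat \<Rightarrow> 'x \<Rightarrow> 'x) \<Rightarrow> nat \<Rightarrow> nat \<Rightarrow> 'x \<Rightarrow> 'x" where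
  "front_face d m 0 x = x"
| "front_face d m (Suc k) x = front_face d m k (d (Suc (m + k)) (Suc (m + k)) x)"

lemma top_faces_eq_front_face: "top_faces d k x = front_face d 2 k x"
  by (induction k arbitrary: x) (simp_all add: numeral_3_eq_3)

lemma front_face_Suc_eq_face:
  "front_face d m (Suc k) x = d (Suc m) (Suc m) (front_face d (Suc m) k x)"
  by (induction k arbitrary: x) simp_all

locale simplicial =
  fixes X :: "nat \<Rightarrow> 'x set" and d s :: "nat \<Rightarrow> nat \<Rightarrow> 'x \<Rightarrow> 'x"
  assumes simplicial: "simplicial_set X d s"
begin

lemma face_closed: "i \<le> Suc n \<Longrightarrow> x \<in> X (Suc n) \<Longrightarrow> d (Suc n) i x \<in> X n"
  using simplicial[unfolded simplicial_set_def, THEN conjunct1, rule_format, of "Suc n" i x]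
  by simp

lemma face_face:
  "i \<le> j \<Longrightarrow> j \<le> Suc n \<Longrightarrow> x \<in> X (Suc (Suc n)) \<Longrightarrow>
    d (Suc n) i (d (Suc (Suc n)) (Suc j) x) = d (Suc n) j (d (Suc (Suc n)) i x)"
  using simplicial[unfolded simplicial_set_def, THEN conjunct2, THEN conjunct2, THEN conjunct1,
      rule_format, of "Suc (Suc n)" i "Suc j" x]
  by simp

lemma face_degen_less:
  "i \<le> j \<Longrightarrow> j \<le> n \<Longrightarrow> x \<in> X (Suc n) \<Longrightarrow>
    d (Suc (Suc n)) i (s (Suc n) (Suc j) x) = s n j (d (Suc n) i x)"
  using simplicial[unfolded simplicial_set_def, THEN conjunct2, THEN conjunct2, THEN conjunct2,
      THEN conjunct1, rule_format, of i "Suc j" "Suc n" x]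
  by simp

lemma face_degen_eq: "j \<le> n \<Longrightarrow> x \<in> X n \<Longrightarrow> d (Suc n) j (s n j x) = x"
  and face_degen_Suc_eq: "j \<le> n \<Longrightarrow> x \<in> X n \<Longrightarrow> d (Suc n) (Suc j) (s n j x) = x"
  using simplicial unfolding simplicial_set_def by blast+

lemma face_degen_greater:
  "j < i \<Longrightarrow> i \<le> Suc n \<Longrightarrow> x \<in> X (Suc n) \<Longrightarrow>
    d (Suc (Suc n)) (Suc i) (s (Suc n) j x) = s n j (d (Suc n) i x)"
  using simplicial[unfolded simplicial_set_def, THEN conjunct2, THEN conjunct2, THEN conjunct2,
      THEN conjunct2, THEN conjunct2, THEN conjunct1, rule_format, of j "Suc i" "Suc n" x]
  by simp

lemma front_face_closed: "x \<in> X (m + k) \<Longrightarrow> front_face d m k x \<in> X m"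
  by (induction k arbitrary: x) (simp_all add: face_closed)

lemma front_face_face_above:
  "m < j \<Longrightarrow> j \<le> Suc (m + k) \<Longrightarrow> x \<in> X (Suc (m + k)) \<Longrightarrow>
    front_face d m k (d (Suc (m + k)) j x) = front_face d m (Suc k) x"
proof (induction k arbitrary: x)
  case (Suc k)
  show ?case
  proof (cases "j = Suc (Suc (m + k))")
    case False
    then have "d (Suc (m + k)) (Suc (m + k)) (d (Suc (Suc (m + k))) j x)
        = d (Suc (m + k)) j (d (Suc (Suc (m + k))) (Suc (Suc (m + k))) x)"
      using Suc.prems by (simp add: face_face)
    then show ?thesis
      using Suc face_closed False by simp
  qed simp
next
  case 0
  then have "j = Suc m" by simp
  then show ?case by simp
qed

lemma front_face_face_below:
  "i \<le> Suc m \<Longrightarrow> x \<in> X (Suc (m + k)) \<Longrightarrow>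
    front_face d m k (d (Suc (m + k)) i x) = d (Suc m) i (front_face d (Suc m) k x)"
proof (induction k arbitrary: x)
  case (Suc k)
  then have "d (Suc (m + k)) (Suc (m + k)) (d (Suc (Suc (m + k))) i x)
      = d (Suc (m + k)) i (d (Suc (Suc (m + k))) (Suc (Suc (m + k))) x)"
    by (simp add: face_face)
  then show ?case
    using Suc face_closed by simp
qed simp

lemma front_face_degen_above:
  "m \<le> j \<Longrightarrow> j \<le> m + k \<Longrightarrow> x \<in> X (m + k) \<Longrightarrow>
    front_face d m (Suc k) (s (m + k) j x) = front_face d m k x"
proof (induction k arbitrary: x)
  case 0
  then show ?case by (simp add: face_degen_Suc_eq)
next
  case (Suc k)
  show ?case
  proof (cases "j = Suc (m + k)")
    case True
    then show ?thesis using Suc.prems by (simp add: face_degen_Suc_eq)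
  next
    case False
    then have "d (Suc (Suc (m + k))) (Suc (Suc (m + k))) (s (Suc (m + k)) j x)
        = s (m + k) j (d (Suc (m + k)) (Suc (m + k)) x)"
      using Suc.prems by (simp add: face_degen_greater)
    then show ?thesis
      using Suc False face_closed by simp
  qed
qed

lemma front_face_degen_below:
  "j \<le> m \<Longrightarrow> x \<in> X (m + k) \<Longrightarrow>
    front_face d (Suc m) k (s (m + k) j x) = s m j (front_face d m k x)"
proof (induction k arbitrary: x)
  case (Suc k)
  then have "d (Suc (Suc (m + k))) (Suc (Suc (m + k))) (s (Suc (m + k)) j x)
      = s (m + k) j (d (Suc (m + k)) (Suc (m + k)) x)"
    by (simp add: face_degen_greater)
  then show ?case
    using Suc face_closed by simp
qed simp

end

lemma eta_cocycle_Suc_Suc: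
  "eta_cocycle \<gamma> d (Suc (Suc n)) x = \<gamma> (front_face d 2 n x) #
     nerve_minus (eta_cocycle \<gamma> d (Suc n) (d (Suc (Suc n)) 1 x))
                 (eta_cocycle \<gamma> d (Suc n) (d (Suc (Suc n)) 0 x))"
  by (cases n) (simp_all add: top_faces_eq_front_face)

declare eta_cocycle.simps(3,4) [simp del] front_face.simps(2) [simp del]

locale normalized_cocycle = simplicial X d s
  for X :: "nat \<Rightarrow> 'x set" and d s :: "nat \<Rightarrow> nat \<Rightarrow> 'x \<Rightarrow> 'x" +
  fixes \<gamma> :: "'x \<Rightarrow> 'h::ab_group_add"
  assumes cocycle: "normalized_2_cocycle X d s \<gamma>"
begin

abbreviation \<eta> :: "nat \<Rightarrow> 'x \<Rightarrow> 'h list" where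
  "\<eta> \<equiv> eta_cocycle \<gamma> d"

lemma cocycle_degen_eq_0: "y \<in> X 1 \<Longrightarrow> j \<le> 1 \<Longrightarrow> \<gamma> (s 1 j y) = 0"
  using cocycle unfolding normalized_2_cocycle_def by blast

lemma eta_degen_0: "x \<in> X n \<Longrightarrow> \<eta> (Suc n) (s n 0 x) = replicate n 0"
proof (cases n)
  case (Suc m)
  assume x: "x \<in> X n"
  have "front_face d 2 m (s (Suc m) 0 x) = s 1 0 (front_face d 1 m x)"
    using front_face_degen_below[of 0 1 x m] x Suc by (simp add: numeral_2_eq_2)
  moreover have "front_face d 1 m x \<in> X 1"
    using front_face_closed[of x 1 m] x Suc by simp
  ultimately have "\<gamma> (front_face d 2 m (s (Suc m) 0 x)) = 0"
    using cocycle_degen_eq_0 by simp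
  then show ?thesis
    using x Suc
    by (simp add: eta_cocycle_Suc_Suc face_degen_eq face_degen_Suc_eq nerve_minus_self
        length_eta_cocycle)
qed simp

lemma eta_degen_1: "x \<in> X (Suc m) \<Longrightarrow> \<eta> (Suc (Suc m)) (s (Suc m) 1 x) = 0 # \<eta> (Suc m) x"
proof -
  assume x: "x \<in> X (Suc m)"
  have "front_face d 2 m (s (Suc m) 1 x) = s 1 1 (front_face d 1 m x)"
    using front_face_degen_below[of 1 1 x m] x by (simp add: numeral_2_eq_2)
  moreover have "front_face d 1 m x \<in> X 1"
    using front_face_closed[of x 1 m] x by simp
  ultimately have "\<gamma> (front_face d 2 m (s (Suc m) 1 x)) = 0"
    using cocycle_degen_eq_0 by simp
  moreover have "d (Suc (Suc m)) 0 (s (Suc m) 1 x) = s m 0 (d (Suc m) 0 x)"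
    using face_degen_less[of 0 0 m x] x by simp
  ultimately show ?thesis
    using x
    by (simp add: eta_cocycle_Suc_Suc face_degen_eq eta_degen_0 face_closed
        nerve_minus_replicate_zero length_eta_cocycle)
qed

lemma eta_degen:
  "x \<in> X (Suc m) \<Longrightarrow> j \<le> m \<Longrightarrow>
    \<eta> (Suc (Suc m)) (s (Suc m) (Suc j) x) = nerve_degen m j (\<eta> (Suc m) x)"
proof (induction m arbitrary: j x)
  case 0
  then show ?case using eta_degen_1[of x 0] by (simp add: nerve_degen_0)
next
  case (Suc m)
  show ?case
  proof (cases j)
    case 0
    then show ?thesis using eta_degen_1[of x "Suc m"] Suc.prems by (simp add: nerve_degen_0)
  next
    case (Suc j')
    have faces: "d (Suc (Suc (Suc m))) i (s (Suc (Suc m)) (Suc j) x)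
        = s (Suc m) j (d (Suc (Suc m)) i x)" if "i \<le> 1" for i
      using face_degen_less[of i j "Suc m" x] Suc Suc.prems that by simp
    have "front_face d 2 (Suc m) (s (Suc (Suc m)) (Suc j) x) = front_face d 2 m x"
      using front_face_degen_above[of 2 "Suc j" m x] Suc Suc.prems by (simp add: numeral_2_eq_2)
    then have "\<eta> (Suc (Suc (Suc m))) (s (Suc (Suc m)) (Suc j) x)
        = \<gamma> (front_face d 2 m x) #
          nerve_minus (nerve_degen m j' (\<eta> (Suc m) (d (Suc (Suc m)) 1 x)))
            (nerve_degen m j' (\<eta> (Suc m) (d (Suc (Suc m)) 0 x)))"
      using Suc Suc.prems faces[of 0] faces[of 1] Suc.IH[of _ j'] face_closed
      by (simp add: eta_cocycle_Suc_Suc[of _ _ "Suc m"])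
    also have "\<dots> = nerve_degen (Suc m) j (\<eta> (Suc (Suc m)) x)"
      unfolding eta_cocycle_Suc_Suc[of _ _ m] Suc
      by (simp add: nerve_degen_Suc_Cons nerve_degen_minus length_eta_cocycle)
    finally show ?thesis .
  qed
qed

lemma eta_face_1:
  assumes x: "x \<in> X (Suc (Suc (Suc m)))"
  shows "nerve_face (Suc (Suc m)) 1 (\<eta> (Suc (Suc (Suc m))) x)
    = \<eta> (Suc (Suc m)) (d (Suc (Suc (Suc m))) 2 x)"
proof -
  define y where "y = front_face d 3 m x"
  have y: "y \<in> X 3"
    using front_face_closed[of x 3 m] x unfolding y_def by (simp add: numeral_3_eq_3)
  have top: "front_face d 2 (Suc m) x = d 3 3 y"
    unfolding y_def front_face_Suc_eq_face by (simp add: numeral_3_eq_3)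
  have front_faces: "front_face d 2 m (d (Suc (Suc (Suc m))) i x) = d 3 i y" if "i \<le> 3" for i
    using front_face_face_below[of i 2 x m] x that unfolding y_def by (simp add: numeral_3_eq_3)
  have faces:
    "d (Suc (Suc m)) 1 (d (Suc (Suc (Suc m))) 1 x) = d (Suc (Suc m)) 1 (d (Suc (Suc (Suc m))) 2 x)"
    "d (Suc (Suc m)) 0 (d (Suc (Suc (Suc m))) 1 x) = d (Suc (Suc m)) 0 (d (Suc (Suc (Suc m))) 0 x)"
    "d (Suc (Suc m)) 1 (d (Suc (Suc (Suc m))) 0 x) = d (Suc (Suc m)) 0 (d (Suc (Suc (Suc m))) 2 x)"
    using face_face[of 1 1 "Suc m" x] face_face[of 0 0 "Suc m" x] face_face[of 0 1 "Suc m" x] x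
    by (simp_all add: numeral_2_eq_2)
  have "nerve_face (Suc (Suc m)) 1 (\<eta> (Suc (Suc (Suc m))) x)
      = (\<gamma> (d 3 3 y) + (\<gamma> (d 3 1 y) - \<gamma> (d 3 0 y))) #
        nerve_minus (\<eta> (Suc m) (d (Suc (Suc m)) 1 (d (Suc (Suc (Suc m))) 2 x)))
          (\<eta> (Suc m) (d (Suc (Suc m)) 0 (d (Suc (Suc (Suc m))) 2 x)))"
    unfolding eta_cocycle_Suc_Suc[of _ _ "Suc m"] eta_cocycle_Suc_Suc[of _ _ m]
    using top front_faces[of 0] front_faces[of 1] faces
    by (simp add: nerve_face_1_Cons_Cons nerve_minus_cancel length_eta_cocycle)
  also have "\<gamma> (d 3 3 y) + (\<gamma> (d 3 1 y) - \<gamma> (d 3 0 y)) = \<gamma> (d 3 2 y)"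
    using cocycle y unfolding normalized_2_cocycle_def by (simp add: algebra_simps)
  also have "\<gamma> (d 3 2 y) #
        nerve_minus (\<eta> (Suc m) (d (Suc (Suc m)) 1 (d (Suc (Suc (Suc m))) 2 x)))
          (\<eta> (Suc m) (d (Suc (Suc m)) 0 (d (Suc (Suc (Suc m))) 2 x)))
      = \<eta> (Suc (Suc m)) (d (Suc (Suc (Suc m))) 2 x)"
    using front_faces[of 2] by (simp add: eta_cocycle_Suc_Suc[of _ _ m])
  finally show ?thesis .
qed

lemma eta_face:
  "x \<in> X (Suc (Suc m)) \<Longrightarrow> 0 < i \<Longrightarrow> i \<le> Suc m \<Longrightarrow>
    nerve_face (Suc m) i (\<eta> (Suc (Suc m)) x) = \<eta> (Suc m) (d (Suc (Suc m)) (Suc i) x)"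
proof (induction m arbitrary: i x)
  case 0
  then show ?case by (simp add: nerve_face_def eta_cocycle.simps)
next
  case (Suc m)
  show ?case
  proof (cases "i = 1")
    case True
    then show ?thesis using eta_face_1 Suc.prems by (simp add: numeral_2_eq_2)
  next
    case False
    then obtain i' where i: "i = Suc i'" "0 < i'" "i' \<le> Suc m"
      using Suc.prems by (metis Suc_le_mono gr0_conv_Suc not_gr0 One_nat_def)
    have faces: "d (Suc (Suc m)) k (d (Suc (Suc (Suc m))) (Suc i) x)
        = d (Suc (Suc m)) i (d (Suc (Suc (Suc m))) k x)" if "k \<le> 1" for k
      using face_face[of k i "Suc m" x] Suc.prems i that by simp
    have "front_face d 2 m (d (Suc (Suc (Suc m))) (Suc i) x) = front_face d 2 (Suc m) x"
      using front_face_face_above[of 2 "Suc i" m x] Suc.prems i by (simp add: numeral_2_eq_2)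
    then have "\<eta> (Suc (Suc m)) (d (Suc (Suc (Suc m))) (Suc i) x)
        = \<gamma> (front_face d 2 (Suc m) x) #
          nerve_minus (nerve_face (Suc m) i' (\<eta> (Suc (Suc m)) (d (Suc (Suc (Suc m))) 1 x)))
            (nerve_face (Suc m) i' (\<eta> (Suc (Suc m)) (d (Suc (Suc (Suc m))) 0 x)))"
      using Suc.prems i faces[of 0] faces[of 1] Suc.IH[of _ i'] face_closed
      by (simp add: eta_cocycle_Suc_Suc[of _ _ m])
    also have "\<dots> = nerve_face (Suc (Suc m)) i (\<eta> (Suc (Suc (Suc m))) x)"
      unfolding eta_cocycle_Suc_Suc[of _ _ "Suc m"] i
      using i by (simp add: nerve_face_Suc_Cons nerve_face_minus length_eta_cocycle)
    finally show ?thesis by (rule sym)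
  qed
qed

end

theorem mainTheorem10:
  fixes X :: "nat \<Rightarrow> 'x set" and d s :: "nat \<Rightarrow> nat \<Rightarrow> 'x \<Rightarrow> 'x"
    and \<gamma> :: "'x \<Rightarrow> 'h::ab_group_add"
  assumes "simplicial_set X d s"
    and "normalized_2_cocycle X d s \<gamma>"
  shows "twisting_function X d s (eta_cocycle \<gamma> d)"
proof -
  interpret normalized_cocycle X d s \<gamma>
    by unfold_locales (fact assms)+
  have dim_ge_2: "\<exists>m. n = Suc (Suc m)" if "2 \<le> n" for n :: nat
    using that by (metis add_2_eq_Suc le_Suc_ex)
  show ?thesis
    unfolding twisting_function_def
  proof (intro conjI allI impI)
    fix n :: nat and x
    assume "2 \<le> n"
    then show "nerve_face (n - 1) 0 (\<eta> n x)
        = nerve_minus (\<eta> (n - 1) (d n 1 x)) (\<eta> (n - 1) (d n 0 x))"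
      using dim_ge_2[of n] by (auto simp: eta_cocycle_Suc_Suc)
  next
    fix n i :: nat and x
    assume "2 \<le> n" "0 < i" "i \<le> n - 1" "x \<in> X n"
    then show "nerve_face (n - 1) i (\<eta> n x) = \<eta> (n - 1) (d n (Suc i) x)"
      using dim_ge_2 eta_face by fastforce
  next
    fix n j :: nat and x
    assume "0 < j" "j \<le> n" "x \<in> X n"
    then show "\<eta> (Suc n) (s n j x) = nerve_degen (n - 1) (j - 1) (\<eta> n x)"
      using eta_degen[of x "n - 1" "j - 1"] by simp
  qed (simp_all add: length_eta_cocycle eta_degen_0)
qed

end
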